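(* Let $B \in M_m \otimes M_n$ (a real matrix, not necessarily symmetric). Then \[ \mu_{\min}(B) \ge W^{1+i}_{\min}(B) \quad\text{and}\quad \mu_{\max}(B) \le W^{1+i}_{\max}(B). \]
   Context: $M_n$ denotes real $n\times n$ matrices and $M_m\otimes M_n$ is identified with $M_{mn}$ via the Kronecker product. For $A = \sum_j X_j \otimes Y_j \in M_m\otimes M_n$, the partial transpose is the linear map $A^\Gamma = \sum_j X_j \otimes Y_j^T$. For $B \in M_m\otimes M_n$, $\mu_{\min}(B) = \min\{(\mathbf{v}\otimes\mathbf{w})^T B(\mathbf{v}\otimes\mathbf{w}) : \mathbf{v}\in\mathbb{R}^m,\mathbf{w}\in\mathbb{R}^n, \|\mathbf{v}\|=\|\mathbf{w}\|=1\}$ and $\mu_{\max}(B)$ is the corresponding maximum. The numerical range of a complex matrix $A\in M_N(\mathbb{C})$ is $W(A) = \{\mathbf{x}^*A\mathbf{x} : \mathbf{x}\in\mathbb{C}^N, \|\mathbf{x}\|=1\}$. Define $W^{1+i}(B) = \{c\in\mathbb{R} : c(1+i) \in W(B + iB^\Gamma)\}$; this is a nonempty compact interval, and $W^{1+i}_{\min}(B)$, $W^{1+i}_{\max}(B)$ denote its minimum and maximum. *)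

theory Defs
  imports "HOL-Analysis.Analysis"
begin

text \<open>Elements of M_m \<otimes> M_n are real matrices indexed by pairs (i,k), i in 'm, k in 'n,
  with the Kronecker convention (X \<otimes> Y)_((i,k),(j,l)) = X_ij * Y_kl.\<close>

type_synonym ('m, 'n) bimat = "real ^ ('m \<times> 'n) ^ ('m \<times> 'n)"

definition partial_transpose :: "('m::finite, 'n::finite) bimat \<Rightarrow> ('m, 'n) bimat" where
  "partial_transpose B = (\<chi> p q. B $ (fst p, snd q) $ (fst q, snd p))"

definition tensor_vec :: "real ^ 'm \<Rightarrow> real ^ 'n \<Rightarrow> real ^ ('m \<times> 'n)" where
  "tensor_vec v w = (\<chi> p. v $ fst p * w $ snd p)"

definition product_values :: "('m::finite, 'n::finite) bimat \<Rightarrow> real set" where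
  "product_values B = {tensor_vec v w \<bullet> (B *v tensor_vec v w) | v w.
      norm v = 1 \<and> norm w = 1}"

definition mu_min :: "('m::finite, 'n::finite) bimat \<Rightarrow> real" where
  "mu_min B = Inf (product_values B)"

definition mu_max :: "('m::finite, 'n::finite) bimat \<Rightarrow> real" where
  "mu_max B = Sup (product_values B)"

definition numerical_range :: "complex ^ 'N ^ 'N \<Rightarrow> complex set" where
  "numerical_range A = {(\<Sum>p\<in>UNIV. \<Sum>q\<in>UNIV. cnj (x $ p) * A $ p $ q * x $ q) | x.
      norm (x :: complex ^ 'N) = 1}"

definition W1i :: "('m::finite, 'n::finite) bimat \<Rightarrow> real set" where
  "W1i B = {c. complex_of_real c * (1 + \<i>) \<in>
     numerical_range (\<chi> p q. complex_of_real (B $ p $ q)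
                             + \<i> * complex_of_real (partial_transpose B $ p $ q))}"

definition W1i_min :: "('m::finite, 'n::finite) bimat \<Rightarrow> real" where
  "W1i_min B = Inf (W1i B)"

definition W1i_max :: "('m::finite, 'n::finite) bimat \<Rightarrow> real" where
  "W1i_max B = Sup (W1i B)"

end

theory Submission
  imports Defs
begin

text \<open>For a product vector \<open>t = v \<otimes> w\<close> the quadratic forms of \<open>B\<close> and of its partial
  transpose agree, because \<open>t(i,k) t(j,l) = v(i) w(k) v(j) w(l)\<close> is symmetric in \<open>k\<close> and \<open>l\<close>.
  So, read as a complex unit vector, \<open>t\<close> gives the point \<open>c (1 + i)\<close> of the numerical range of
  \<open>B + i B\<^sup>\<Gamma>\<close>, where \<open>c = t\<^sup>T B t\<close>. Every value whose infimum and supremum are the \<open>\<mu>\<close>'s thus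
  lies in the bounded set \<open>W\<^sup>1\<^sup>+\<^sup>i(B)\<close>.\<close>

lemma inner_matrix_vector_mult_eq_sum:
  fixes A :: "real ^ 'n ^ 'n::finite"
  shows "x \<bullet> (A *v x) = (\<Sum>p\<in>UNIV. \<Sum>q\<in>UNIV. x $ p * A $ p $ q * x $ q)"
  unfolding inner_vec_def matrix_vector_mult_def
  by (simp add: sum_distrib_left mult.assoc mult.left_commute)

lemma norm_tensor_vec:
  "norm (tensor_vec (v::real^'m::finite) (w::real^'n::finite)) = norm v * norm w"
proof -
  have "tensor_vec v w \<bullet> tensor_vec v w = (\<Sum>(i, k)\<in>UNIV \<times> UNIV. (v $ i * v $ i) * (w $ k * w $ k))"
    unfolding inner_vec_def tensor_vec_def UNIV_Times_UNIV[symmetric]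
    by (intro sum.cong) (auto simp: algebra_simps)
  also have "\<dots> = (v \<bullet> v) * (w \<bullet> w)"
    unfolding inner_vec_def sum.cartesian_product[symmetric]
    by (simp add: sum_product)
  finally show ?thesis
    by (simp add: norm_eq_sqrt_inner real_sqrt_mult)
qed

lemma partial_transpose_quadratic_form_tensor_vec:
  fixes B :: "('m::finite, 'n::finite) bimat" and v :: "real ^ 'm" and w :: "real ^ 'n"
  defines "t \<equiv> tensor_vec v w"
  shows "t \<bullet> (partial_transpose B *v t) = t \<bullet> (B *v t)"
proof -
  let ?swap = "\<lambda>((i, k), (j, l)). ((i, l), (j, k)) :: ('m \<times> 'n) \<times> ('m \<times> 'n)"
  have "(\<Sum>(p, q)\<in>UNIV \<times> UNIV. t $ p * partial_transpose B $ p $ q * t $ q)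
      = (\<Sum>(p, q)\<in>UNIV \<times> UNIV. t $ p * B $ p $ q * t $ q)"
    by (rule sum.reindex_bij_witness[where i = ?swap and j = ?swap])
       (auto simp: t_def tensor_vec_def partial_transpose_def)
  then show ?thesis
    unfolding inner_matrix_vector_mult_eq_sum sum.cartesian_product .
qed

lemma quadratic_forms_in_numerical_range:
  fixes P Q :: "real ^ 'N ^ 'N::finite" and x :: "real ^ 'N"
  assumes "norm x = 1"
  shows "complex_of_real (x \<bullet> (P *v x)) + \<i> * complex_of_real (x \<bullet> (Q *v x))
    \<in> numerical_range (\<chi> p q. complex_of_real (P $ p $ q) + \<i> * complex_of_real (Q $ p $ q))"
proof -
  let ?y = "\<chi> p. complex_of_real (x $ p)"
  have "?y \<bullet> ?y = x \<bullet> x"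
    unfolding inner_vec_def by (simp add: inner_complex_def)
  then have "norm ?y = 1"
    using assms by (simp add: norm_eq_sqrt_inner)
  moreover have "complex_of_real (x \<bullet> (P *v x)) + \<i> * complex_of_real (x \<bullet> (Q *v x))
    = (\<Sum>p\<in>UNIV. \<Sum>q\<in>UNIV. cnj (?y $ p)
         * (\<chi> p q. complex_of_real (P $ p $ q) + \<i> * complex_of_real (Q $ p $ q)) $ p $ q * ?y $ q)"
    unfolding inner_matrix_vector_mult_eq_sum of_real_sum sum_distrib_left sum.distrib[symmetric]
    by (intro sum.cong) (simp_all add: algebra_simps)
  ultimately show ?thesis
    unfolding numerical_range_def by blast
qed

lemma product_values_subset_W1i:
  fixes B :: "('m::finite, 'n::finite) bimat"
  shows "product_values B \<subseteq> W1i B"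
proof
  fix c assume "c \<in> product_values B"
  then obtain v w where "norm v = 1" "norm w = 1" and c: "c = tensor_vec v w \<bullet> (B *v tensor_vec v w)"
    unfolding product_values_def by blast
  then have "norm (tensor_vec v w) = 1"
    by (simp add: norm_tensor_vec)
  from quadratic_forms_in_numerical_range[OF this, of B "partial_transpose B"]
  show "c \<in> W1i B"
    unfolding W1i_def partial_transpose_quadratic_form_tensor_vec c[symmetric]
    by (simp add: algebra_simps)
qed

lemma norm_numerical_range_le:
  fixes A :: "complex ^ 'N ^ 'N::finite"
  assumes "z \<in> numerical_range A"
  shows "norm z \<le> (\<Sum>p\<in>UNIV. \<Sum>q\<in>UNIV. norm (A $ p $ q))"
proof -
  obtain x :: "complex ^ 'N" where "norm x = 1"
    and z: "z = (\<Sum>p\<in>UNIV. \<Sum>q\<in>UNIV. cnj (x $ p) * A $ p $ q * x $ q)"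
    using assms unfolding numerical_range_def by blast
  then have x_le: "norm (x $ p) \<le> 1" for p
    using Finite_Cartesian_Product.norm_nth_le[of x p] by simp
  have "norm z \<le> (\<Sum>p\<in>UNIV. \<Sum>q\<in>UNIV. norm (cnj (x $ p) * A $ p $ q * x $ q))"
    unfolding z by (rule order_trans[OF norm_sum sum_mono[OF norm_sum]])
  also have "\<dots> \<le> (\<Sum>p\<in>UNIV. \<Sum>q\<in>UNIV. norm (A $ p $ q))"
  proof (intro sum_mono)
    fix p q
    have "norm (cnj (x $ p) * A $ p $ q * x $ q) = norm (x $ p) * norm (A $ p $ q) * norm (x $ q)"
      by (simp add: norm_mult)
    also have "\<dots> \<le> 1 * norm (A $ p $ q) * 1"
      using x_le by (intro mult_mono) auto
    finally show "norm (cnj (x $ p) * A $ p $ q * x $ q) \<le> norm (A $ p $ q)"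
      by simp
  qed
  finally show ?thesis .
qed

lemma bounded_W1i:
  fixes B :: "('m::finite, 'n::finite) bimat"
  shows "bounded (W1i B)"
proof -
  let ?A = "\<chi> p q. complex_of_real (B $ p $ q) + \<i> * complex_of_real (partial_transpose B $ p $ q)"
  have "\<bar>c\<bar> \<le> (\<Sum>p\<in>UNIV. \<Sum>q\<in>UNIV. norm (?A $ p $ q))" if "c \<in> W1i B" for c
  proof -
    have "1 \<le> norm (1 + \<i>)"
      by (simp add: cmod_def)
    then have "\<bar>c\<bar> \<le> norm (complex_of_real c * (1 + \<i>))"
      by (simp add: norm_mult mult_le_cancel_left1)
    also have "\<dots> \<le> (\<Sum>p\<in>UNIV. \<Sum>q\<in>UNIV. norm (?A $ p $ q))"
      using that unfolding W1i_def by (blast intro: norm_numerical_range_le)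
    finally show ?thesis .
  qed
  then show ?thesis
    unfolding bounded_iff by auto
qed

lemma product_values_nonempty: "product_values (B :: ('m::finite, 'n::finite) bimat) \<noteq> {}"
proof -
  have "norm (axis (undefined :: 'm) (1::real)) = 1" "norm (axis (undefined :: 'n) (1::real)) = 1"
    by simp_all
  then show ?thesis
    unfolding product_values_def by blast
qed

theorem theorem3p1:
  fixes B :: "('m::finite, 'n::finite) bimat"
  shows "mu_min B \<ge> W1i_min B \<and> mu_max B \<le> W1i_max B"
proof -
  note nonempty = product_values_nonempty[of B] and subset = product_values_subset_W1i[of B]
  have "Inf (W1i B) \<le> Inf (product_values B)"
    using bounded_W1i[of B] by (intro cInf_superset_mono[OF nonempty _ subset] bounded_imp_bdd_below)
  moreover have "Sup (product_values B) \<le> Sup (W1i B)"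
    using bounded_W1i[of B] by (intro cSup_subset_mono[OF nonempty _ subset] bounded_imp_bdd_above)
  ultimately show ?thesis
    unfolding mu_min_def mu_max_def W1i_min_def W1i_max_def ..
qed

end
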